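(* Let $\mathcal N$ be a phylogenetic network on $X$ with vertex set $V$ and $|X|\ge 2$, fix an ordering $v_1,\dots,v_t$ of $V\setminus X$, and let $\Sigma=\Sigma_{\mathcal N}=\{(x,\sigma(x)):x\in X\}$ be the corresponding ancestral profile. Let $\{a,b\}\subseteq X$. (i) Suppose $\{a,b\}$ is a cherry of $\mathcal N$. Choose any index $j$ with $\sigma_j(a)=\sigma_j(b)=1$ and $\sigma_j(x)=0$ for all $x\in X\setminus\{a,b\}$, and let $\Sigma'=\{(x,\sigma'(x)):x\in X\setminus\{b\}\}$, where $\sigma'(x)$ is obtained from $\sigma(x)$ by deleting the $j$-th entry. Then $\Sigma'$ is the ancestral profile of the network $\mathcal N'$ obtained from $\mathcal N$ by reducing $b$, with respect to some ordering of the non-leaf vertices of $\mathcal N'$. (ii) Suppose $\{a,b\}$ is a reticulated cherry of $\mathcal N$ with reticulation leaf $b$. Choose any index $j$ with $\sigma_j(a)=\sigma_j(b)=1$ and $\sigma_j(x)=0$ for all $x\in X\setminus\{a,b\}$, and any index $k$ with $\sigma_k(b)=1$ and $\sigma_k(x)=0$ for all $x\in X\setminus\{b\}$. Let $\Sigma'=\{(x,\sigma'(x)):x\in X\}$, where for $x\neq b$, $\sigma'(x)$ is obtained from $\sigma(x)$ by deleting the entries $j$ and $k$, and $\sigma'(b)$ is the tuple with entries $\sigma_i(b)-\sigma_i(a)$ for $i\notin\{j,k\}$ (in the original order). Then $\Sigma'$ is the ancestral profile of the network $\mathcal N'$ obtained from $\mathcal N$ by cutting $\{a,b\}$, with respect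 to some ordering of the non-leaf vertices of $\mathcal N'$.
   Context: A phylogenetic network on $X$ ($X$ non-empty finite) is a rooted acyclic directed graph with no parallel arcs such that: the unique root has in-degree $0$ and out-degree $2$; every vertex of out-degree $0$ has in-degree $1$, and the set of such vertices (leaves) is $X$; every other vertex has either in-degree $1$ and out-degree $2$ (tree vertex) or in-degree $2$ and out-degree $1$ (reticulation). If $|X|=1$ a single vertex is also allowed. For an ordering $v_1,\dots,v_t$ of the non-leaf vertices and $x\in X$, the ancestral tuple $\sigma(x)=(\sigma_1(x),\dots,\sigma_t(x))$ has $\sigma_i(x)$ equal to the number of directed paths from $v_i$ to $x$; the ancestral profile is $\{(x,\sigma(x)):x\in X\}$. For a $2$-element subset $\{a,b\}\subseteq X$ with parents $p_a,p_b$: $\{a,b\}$ is a cherry if $p_a=p_b$; it is a reticulated cherry with reticulation leaf $b$ if $p_b$ is a reticulation and $(p_a,p_b)$ is an arc. Reducing $b$ in a cherry means deleting $b$ and suppressing the resulting vertex of in-degree 1 and out-degree 1 (if the common parent is the root, delete $b$ and the root, leaving the single vertex $a$). Cutting a reticulated cherry $\{a,b\}$ means deleting the arc $(p_a,p_b)$ and suppressing the two resulting vertices of in-degree 1 and out-degree 1. *)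

theory Defs
  imports Main
begin

text \<open>A directed graph is given by a vertex set V and an arc set E (a set of pairs, so
  there are no parallel arcs).\<close>

definition indeg :: "('v \<times> 'v) set \<Rightarrow> 'v \<Rightarrow> nat" where
  "indeg E v = card {u. (u, v) \<in> E}"

definition outdeg :: "('v \<times> 'v) set \<Rightarrow> 'v \<Rightarrow> nat" where
  "outdeg E v = card {w. (v, w) \<in> E}"

definition phylo_network :: "'v set \<Rightarrow> ('v \<times> 'v) set \<Rightarrow> 'v set \<Rightarrow> bool" where
  "phylo_network V E X \<longleftrightarrow>
     finite V \<and> E \<subseteq> V \<times> V \<and> X \<subseteq> V \<and> X \<noteq> {} \<and> acyclic E \<and>
     ((card X = 1 \<and> V = X \<and> E = {}) \<or>
      ((\<exists>!r. r \<in> V \<and> indeg E r = 0) \<and>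
       (\<forall>r\<in>V. indeg E r = 0 \<longrightarrow> outdeg E r = 2) \<and>
       (\<forall>v\<in>V. outdeg E v = 0 \<longleftrightarrow> v \<in> X) \<and>
       (\<forall>v\<in>X. indeg E v = 1) \<and>
       (\<forall>v\<in>V. v \<notin> X \<and> indeg E v \<noteq> 0 \<longrightarrow>
           (indeg E v = 1 \<and> outdeg E v = 2) \<or> (indeg E v = 2 \<and> outdeg E v = 1))))"

definition npaths :: "('v \<times> 'v) set \<Rightarrow> 'v \<Rightarrow> 'v \<Rightarrow> nat" where
  "npaths E u x = card {p. p \<noteq> [] \<and> hd p = u \<and> last p = x \<and>
                          successively (\<lambda>y z. (y, z) \<in> E) p}"

definition is_ordering :: "'v set \<Rightarrow> 'v set \<Rightarrow> 'v list \<Rightarrow> bool" where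
  "is_ordering V X vs \<longleftrightarrow> distinct vs \<and> set vs = V - X"

text \<open>Ancestral tuple (0-based indices) and ancestral profile.\<close>
definition anc_tuple :: "('v \<times> 'v) set \<Rightarrow> 'v list \<Rightarrow> 'v \<Rightarrow> nat list" where
  "anc_tuple E vs x = map (\<lambda>v. npaths E v x) vs"

definition anc_profile :: "('v \<times> 'v) set \<Rightarrow> 'v set \<Rightarrow> 'v list \<Rightarrow> ('v \<times> nat list) set" where
  "anc_profile E X vs = {(x, anc_tuple E vs x) | x. x \<in> X}"

definition parent :: "('v \<times> 'v) set \<Rightarrow> 'v \<Rightarrow> 'v" where
  "parent E x = (THE p. (p, x) \<in> E)"

definition is_cherry :: "('v \<times> 'v) set \<Rightarrow> 'v \<Rightarrow> 'v \<Rightarrow> bool" where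
  "is_cherry E a b \<longleftrightarrow> parent E a = parent E b"

definition is_ret_cherry :: "('v \<times> 'v) set \<Rightarrow> 'v \<Rightarrow> 'v \<Rightarrow> bool" where
  "is_ret_cherry E a b \<longleftrightarrow> indeg E (parent E b) = 2 \<and> (parent E a, parent E b) \<in> E"

definition suppress :: "'v \<Rightarrow> 'v set \<times> ('v \<times> 'v) set \<Rightarrow> 'v set \<times> ('v \<times> 'v) set" where
  "suppress w G = (fst G - {w},
      {(u, z). (u, w) \<in> snd G \<and> (w, z) \<in> snd G} \<union> {e \<in> snd G. fst e \<noteq> w \<and> snd e \<noteq> w})"

definition reduce_cherry :: "'v set \<Rightarrow> ('v \<times> 'v) set \<Rightarrow> 'v \<Rightarrow> 'v \<Rightarrow> 'v set \<times> ('v \<times> 'v) set" where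
  "reduce_cherry V E a b =
     (let p = parent E b in
      if indeg E p = 0 then ({a}, {})
      else suppress p (V - {b}, E - {(p, b)}))"

definition cut_ret_cherry :: "'v set \<Rightarrow> ('v \<times> 'v) set \<Rightarrow> 'v \<Rightarrow> 'v \<Rightarrow> 'v set \<times> ('v \<times> 'v) set" where
  "cut_ret_cherry V E a b =
     (let pa = parent E a; pb = parent E b in
      suppress pb (suppress pa (V, E - {(pa, pb)})))"

end

theory Submission
  imports Defs
begin

text \<open>In a finite acyclic digraph the path numbers N(v, x) are the unique solution of
  N(v, x) = [v = x] + \<Sum>{N(c, x) | v \<rightarrow> c}. Hence suppressing a vertex of in- and
  out-degree 1 changes no path number between the remaining vertices, and deleting an arc
  (s, t) removes exactly N(v, s) \<cdot> N(t, x) paths from v to x.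

  If {a, b} is a cherry with parent p, the column of p in the ancestral profile is 1 at a
  and b and 0 elsewhere, so it coincides with the chosen column j. Reducing b deletes b and
  suppresses p, so no other column changes; putting vs ! j in the place of p in the
  ordering yields the claimed profile. If {a, b} is a reticulated cherry with parents pa and
  pb, the columns j and k are those of pa and pb, which are suppressed by the cut. Deleting
  the arc (pa, pb) only affects paths ending in b, and removes N(v, pa) = N(v, a) of them.\<close>

section \<open>Counting paths in finite acyclic digraphs\<close>

definition walks :: "('v \<times> 'v) set \<Rightarrow> 'v \<Rightarrow> 'v \<Rightarrow> 'v list set" where
  "walks E u x = {p. p \<noteq> [] \<and> hd p = u \<and> last p = x \<and> successively (\<lambda>y z. (y, z) \<in> E) p}"

lemma npaths_eq_card_walks: "npaths E u x = card (walks E u x)"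
  unfolding npaths_def walks_def ..

lemma successively_arcs_trancl:
  "successively (\<lambda>y z. (y, z) \<in> E) (y # ys) \<Longrightarrow> z \<in> set ys \<Longrightarrow> (y, z) \<in> E\<^sup>+"
proof (induction ys arbitrary: y)
  case (Cons w ws)
  then have "(y, w) \<in> E" "successively (\<lambda>y z. (y, z) \<in> E) (w # ws)" by auto
  with Cons show ?case by (cases "z = w") (auto intro: trancl_into_trancl2)
qed simp

lemma successively_arcs_distinct:
  "acyclic E \<Longrightarrow> successively (\<lambda>y z. (y, z) \<in> E) p \<Longrightarrow> distinct p"
proof (induction p)
  case (Cons y ys)
  then have "successively (\<lambda>y z. (y, z) \<in> E) ys" by (cases ys) auto
  moreover have "y \<notin> set ys"
    using successively_arcs_trancl[OF Cons.prems(2)] Cons.prems(1) by (auto simp: acyclic_def)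
  ultimately show ?case using Cons.IH Cons.prems(1) by simp
qed simp

lemma successively_arcs_Range:
  "successively (\<lambda>y z. (y, z) \<in> E) (y # ys) \<Longrightarrow> set ys \<subseteq> Range E"
  by (induction ys arbitrary: y) auto

lemma walk_rtrancl: "p \<in> walks E u x \<Longrightarrow> (u, x) \<in> E\<^sup>*"
proof (induction p arbitrary: u)
  case (Cons y ys)
  show ?case
  proof (cases ys)
    case (Cons c zs)
    then have "(u, c) \<in> E" "ys \<in> walks E c x" using Cons.prems by (auto simp: walks_def)
    then show ?thesis using Cons.IH by (meson converse_rtrancl_into_rtrancl)
  qed (use Cons.prems in \<open>auto simp: walks_def\<close>)
qed (simp add: walks_def)

lemma finite_walks:
  assumes "finite E" "acyclic E"
  shows "finite (walks E u x)"
proof (rule finite_subset)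
  let ?A = "insert u (Range E)"
  show "walks E u x \<subseteq> {p. set p \<subseteq> ?A \<and> length p \<le> card ?A}"
  proof
    fix p assume p: "p \<in> walks E u x"
    then obtain ys where p_eq: "p = u # ys" and arcs: "successively (\<lambda>y z. (y, z) \<in> E) p"
      unfolding walks_def by (cases p) auto
    have "set p \<subseteq> ?A" using successively_arcs_Range[of E u ys] arcs p_eq by auto
    moreover have "finite ?A" using assms(1) by (simp add: finite_Range)
    ultimately have "length p \<le> card ?A"
      using successively_arcs_distinct[OF assms(2) arcs] by (metis card_mono distinct_card)
    with \<open>set p \<subseteq> ?A\<close> show "p \<in> {p. set p \<subseteq> ?A \<and> length p \<le> card ?A}" by blast
  qed
  show "finite {p. set p \<subseteq> ?A \<and> length p \<le> card ?A}"
    by (rule finite_lists_length_le) (simp add: assms(1) finite_Range)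
qed

lemma walks_unfold:
  "walks E u x = (if u = x then {[u]} else {}) \<union> (\<Union>c\<in>{c. (u, c) \<in> E}. (#) u ` walks E c x)"
proof (intro set_eqI iffI)
  fix p assume "p \<in> walks E u x"
  then obtain ys where p_eq: "p = u # ys" and "successively (\<lambda>y z. (y, z) \<in> E) p" "last p = x"
    unfolding walks_def by (cases p) auto
  then show "p \<in> (if u = x then {[u]} else {}) \<union> (\<Union>c\<in>{c. (u, c) \<in> E}. (#) u ` walks E c x)"
  proof (cases ys)
    case (Cons c zs)
    with p_eq \<open>p \<in> walks E u x\<close> have "(u, c) \<in> E" "ys \<in> walks E c x"
      by (auto simp: walks_def)
    with p_eq show ?thesis by blast
  qed (use p_eq \<open>last p = x\<close> in simp)
next
  fix p assume "p \<in> (if u = x then {[u]} else {}) \<union> (\<Union>c\<in>{c. (u, c) \<in> E}. (#) u ` walks E c x)"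
  then show "p \<in> walks E u x"
  proof
    assume "p \<in> (\<Union>c\<in>{c. (u, c) \<in> E}. (#) u ` walks E c x)"
    then obtain c ys where "(u, c) \<in> E" "ys \<in> walks E c x" "p = u # ys" by auto
    then show ?thesis unfolding walks_def by (cases ys) auto
  qed (auto simp: walks_def split: if_splits)
qed

lemma finite_children: "finite E \<Longrightarrow> finite {c. (u, c) \<in> E}"
  by (rule finite_subset[of _ "Range E"]) (auto simp: finite_Range)

lemma npaths_rec:
  assumes "finite E" "acyclic E"
  shows "npaths E u x = (if u = x then 1 else 0) + (\<Sum>c\<in>{c. (u, c) \<in> E}. npaths E c x)"
proof -
  let ?C = "{c. (u, c) \<in> E}"
  have fin: "finite (walks E c x)" for c using finite_walks[OF assms] .
  have "card (\<Union>c\<in>?C. (#) u ` walks E c x) = (\<Sum>c\<in>?C. card ((#) u ` walks E c x))"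
    using finite_children[OF assms(1)] fin by (intro card_UN_disjoint) (auto simp: walks_def)
  also have "\<dots> = (\<Sum>c\<in>?C. npaths E c x)"
    by (simp add: card_image npaths_eq_card_walks)
  finally have "card (\<Union>c\<in>?C. (#) u ` walks E c x) = (\<Sum>c\<in>?C. npaths E c x)" .
  moreover have "card (walks E u x)
      = card (if u = x then {[u]} else {}) + card (\<Union>c\<in>?C. (#) u ` walks E c x)"
    using finite_children[OF assms(1)] fin
    by (subst walks_unfold, intro card_Un_disjoint) (auto simp: walks_def)
  ultimately show ?thesis by (simp add: npaths_eq_card_walks)
qed

text \<open>All path counts below are computed by exhibiting a solution of this recursion.\<close>
lemma npaths_unique:
  assumes "finite E" "acyclic E"
    and rec: "\<And>v. f v = (if v = x then 1 else 0) + (\<Sum>c\<in>{c. (v, c) \<in> E}. f c)"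
  shows "f v = npaths E v x"
  using finite_acyclic_wf_converse[OF assms(1,2)]
proof (induction v rule: wf_induct_rule)
  case (less v)
  have "f v = (if v = x then 1 else 0) + (\<Sum>c\<in>{c. (v, c) \<in> E}. npaths E c x)"
    using less.IH by (subst rec) (auto intro!: sum.cong)
  also have "\<dots> = npaths E v x" by (rule npaths_rec[OF assms(1,2), symmetric])
  finally show ?case .
qed

lemma npaths_sink:
  "finite E \<Longrightarrow> acyclic E \<Longrightarrow> {c. (v, c) \<in> E} = {} \<Longrightarrow> npaths E v x = (if v = x then 1 else 0)"
  by (subst npaths_rec) simp_all

lemma npaths_eq_0: "(u, x) \<notin> E\<^sup>* \<Longrightarrow> npaths E u x = 0"
  using walk_rtrancl[of _ E u x] by (metis card.empty equals0I npaths_eq_card_walks)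

lemma npaths_self:
  assumes "finite E" "acyclic E"
  shows "npaths E x x = 1"
proof -
  have "npaths E c x = 0" if "(x, c) \<in> E" for c
    using that assms(2) by (intro npaths_eq_0) (auto simp: acyclic_def dest: rtrancl_into_trancl2)
  then show ?thesis using npaths_rec[OF assms, of x x] by simp
qed

text \<open>Paths using the arc (s, t) are a path to s followed by a path from t; acyclicity
  forbids any other use of the arc.\<close>
lemma npaths_delete_arc:
  assumes fin: "finite E" and acy: "acyclic E" and st: "(s, t) \<in> E"
  shows "npaths E v x = npaths (E - {(s, t)}) v x + npaths E v s * npaths E t x"
proof -
  let ?E' = "E - {(s, t)}"
  have fin': "finite ?E'" and acy': "acyclic ?E'" using fin acyclic_subset[OF acy] by auto
  have back_0: "npaths E c s = 0" if "(s, c) \<in> E" for c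
    using that acy by (intro npaths_eq_0) (auto simp: acyclic_def dest: rtrancl_into_trancl2)
  define f where "f v = npaths ?E' v x + npaths E v s * npaths ?E' t x" for v
  have f_eq: "f v = npaths E v x" for v
  proof (rule npaths_unique[OF fin acy])
    fix v
    have rec': "npaths ?E' v x = (if v = x then 1 else 0) + (\<Sum>c\<in>{c. (v, c) \<in> ?E'}. npaths ?E' c x)"
      by (rule npaths_rec[OF fin' acy'])
    show "f v = (if v = x then 1 else 0) + (\<Sum>c\<in>{c. (v, c) \<in> E}. f c)"
    proof (cases "v = s")
      case True
      have children: "{c. (v, c) \<in> E} = insert t {c. (v, c) \<in> ?E'}" using True st by auto
      have "(\<Sum>c\<in>{c. (v, c) \<in> E}. f c) = (\<Sum>c\<in>{c. (v, c) \<in> E}. npaths ?E' c x)"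
        using True back_0 by (intro sum.cong) (auto simp: f_def)
      also have "\<dots> = npaths ?E' t x + (\<Sum>c\<in>{c. (v, c) \<in> ?E'}. npaths ?E' c x)"
        unfolding children by (rule sum.insert[OF finite_children[OF fin']]) (simp add: True)
      finally show ?thesis using True rec' npaths_self[OF fin acy] by (simp add: f_def)
    next
      case False
      then have children: "{c. (v, c) \<in> ?E'} = {c. (v, c) \<in> E}" by auto
      have "f v = (if v = x then 1 else 0) + (\<Sum>c\<in>{c. (v, c) \<in> E}. npaths ?E' c x)
          + (\<Sum>c\<in>{c. (v, c) \<in> E}. npaths E c s) * npaths ?E' t x"
        using rec' npaths_rec[OF fin acy, of v s] False children by (simp add: f_def)
      then show ?thesis by (simp add: f_def sum.distrib sum_distrib_right)
    qed
  qed
  have "(t, s) \<notin> E\<^sup>*" using st acy by (auto simp: acyclic_def dest: rtrancl_into_trancl2)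
  then have "npaths ?E' t x = npaths E t x" using f_eq[of t] by (simp add: f_def npaths_eq_0)
  then show ?thesis using f_eq[of v] by (simp add: f_def)
qed

text \<open>Once the arc (p, y) is deleted, y has no in-arc left, so every path into y ends with it.\<close>
lemma npaths_unique_parent:
  assumes fin: "finite E" and acy: "acyclic E" and parent: "{u. (u, y) \<in> E} = {p}"
    and "v \<noteq> y"
  shows "npaths E v y = npaths E v p"
proof -
  have "(v, y) \<notin> (E - {(p, y)})\<^sup>*"
  proof
    assume "(v, y) \<in> (E - {(p, y)})\<^sup>*"
    then obtain u where "(u, y) \<in> E - {(p, y)}" using \<open>v \<noteq> y\<close> by (auto elim: rtranclE)
    then show False using parent by auto
  qed
  moreover have "(p, y) \<in> E" using parent by auto
  ultimately show ?thesis
    using npaths_delete_arc[OF fin acy, of p y v y] npaths_eq_0 npaths_self[OF fin acy] by simp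
qed

lemma suppress_arcs:
  assumes "{u. (u, w) \<in> G} = {q}" "{z. (w, z) \<in> G} = {c}"
  shows "snd (suppress w (W, G)) = insert (q, c) {e \<in> G. fst e \<noteq> w \<and> snd e \<noteq> w}"
  using assms unfolding suppress_def by auto

lemma
  assumes fin: "finite G" and acy: "acyclic G"
    and "{u. (u, w) \<in> G} = {q}" "{z. (w, z) \<in> G} = {c}"
  shows finite_suppress: "finite (snd (suppress w (W, G)))"
    and acyclic_suppress: "acyclic (snd (suppress w (W, G)))"
proof -
  have "(q, w) \<in> G" "(w, c) \<in> G" using assms(3,4) by auto
  then have "(q, c) \<in> G\<^sup>+" by (meson r_into_trancl trancl_into_trancl)
  then have "snd (suppress w (W, G)) \<subseteq> G\<^sup>+" using suppress_arcs[OF assms(3,4)] by auto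
  then show "acyclic (snd (suppress w (W, G)))"
    using acy by (metis acyclic_def subsetD trancl_id trancl_mono trans_trancl)
  show "finite (snd (suppress w (W, G)))" using fin suppress_arcs[OF assms(3,4)] by simp
qed

text \<open>The hypothesis (q, c) \<notin> G matters: suppression must not merge two parallel arcs.\<close>
lemma npaths_suppress:
  assumes fin: "finite G" and acy: "acyclic G"
    and parent: "{u. (u, w) \<in> G} = {q}" and child: "{z. (w, z) \<in> G} = {c}"
    and new_arc: "(q, c) \<notin> G" and "x \<noteq> w" "v \<noteq> w"
  shows "npaths (snd (suppress w (W, G))) v x = npaths G v x"
proof -
  let ?G = "snd (suppress w (W, G))"
  have G': "?G = insert (q, c) {e \<in> G. fst e \<noteq> w \<and> snd e \<noteq> w}"
    by (rule suppress_arcs[OF parent child])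
  have qw: "(q, w) \<in> G" and wc: "(w, c) \<in> G" using parent child by auto
  have "q \<noteq> w" "c \<noteq> w" using qw wc acy by (auto simp: acyclic_def)
  define f where "f v = (if v = w then 0 else npaths G v x)" for v
  have "f v = npaths ?G v x" for v
  proof (rule npaths_unique[OF finite_suppress[OF fin acy parent child]
        acyclic_suppress[OF fin acy parent child]])
    fix v
    have rec: "npaths G v x = (if v = x then 1 else 0) + (\<Sum>c\<in>{c. (v, c) \<in> G}. npaths G c x)"
      by (rule npaths_rec[OF fin acy])
    show "f v = (if v = x then 1 else 0) + (\<Sum>c\<in>{c. (v, c) \<in> ?G}. f c)"
    proof (cases "v = w")
      case True
      then have "{c. (v, c) \<in> ?G} = {}" using G' \<open>q \<noteq> w\<close> by auto
      then show ?thesis using True \<open>x \<noteq> w\<close> by (simp add: f_def)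
    next
      case v_ne_w: False
      show ?thesis
      proof (cases "v = q")
        case True
        let ?C = "{c. (q, c) \<in> G} - {w}"
        have C_fin: "finite ?C" using finite_children[OF fin] by auto
        have children: "{c. (v, c) \<in> ?G} = insert c ?C"
          using True G' \<open>q \<noteq> w\<close> \<open>c \<noteq> w\<close> by auto
        have "f v = (if v = x then 1 else 0) + (npaths G w x + (\<Sum>c\<in>?C. npaths G c x))"
          using rec v_ne_w True qw sum.remove[OF finite_children[OF fin], of w q]
          by (simp add: f_def)
        also have "npaths G w x = f c"
          using npaths_rec[OF fin acy, of w x] child \<open>x \<noteq> w\<close> \<open>c \<noteq> w\<close> by (simp add: f_def)
        also have "(\<Sum>c\<in>?C. npaths G c x) = (\<Sum>c\<in>?C. f c)" by (simp add: f_def)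
        also have "f c + (\<Sum>c\<in>?C. f c) = (\<Sum>c\<in>{c. (v, c) \<in> ?G}. f c)"
          unfolding children using new_arc by (subst sum.insert[OF C_fin]) auto
        finally show ?thesis .
      next
        case False
        then have "{c. (v, c) \<in> ?G} = {c. (v, c) \<in> G}" using G' v_ne_w parent by auto
        moreover have "w \<notin> {c. (v, c) \<in> G}" using False parent by auto
        ultimately show ?thesis using rec v_ne_w by (auto simp: f_def intro!: sum.cong)
      qed
    qed
  qed
  from this[of v] show ?thesis using \<open>v \<noteq> w\<close> by (simp add: f_def)
qed

lemma comprehension_upt_eq_map_nths:
  assumes "\<And>i. i < length xs \<Longrightarrow> g i = f (xs ! i)"
  shows "[g i. i \<leftarrow> [0..<length xs], P i] = map f (nths xs {i. P i})"
  using assms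
proof (induction xs arbitrary: g rule: rev_induct)
  case (snoc x xs)
  have "[g i. i \<leftarrow> [0..<length xs], P i] = map f (nths xs {i. P i})"
    using snoc.prems by (intro snoc.IH) (simp add: nth_append)
  moreover have "g (length xs) = f x" using snoc.prems[of "length xs"] by simp
  ultimately show ?case by (simp add: nths_append)
qed simp

lemma set_nths_distinct:
  assumes "distinct xs"
  shows "set (nths xs I) = set xs - {xs ! i | i. i < length xs \<and> i \<notin> I}"
  using assms by (auto simp: set_nths in_set_conv_nth nth_eq_iff_index_eq) blast

lemma inj_on_id_upd_diff: "inj_on (id(p := w)) (A - {w})"
  by (auto simp: inj_on_def)

lemma image_id_upd_diff:
  assumes "w \<in> A" "p \<in> A"
  shows "id(p := w) ` (A - {w}) = A - {p}"
proof (cases "p = w")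
  case False
  have "A - {w} = insert p (A - {w, p})" using assms False by blast
  then show ?thesis using assms False by force
qed simp

lemma inj_on_id_upd2_diff: "w1 \<noteq> w2 \<Longrightarrow> inj_on (id(p1 := w1, p2 := w2)) (A - {w1, w2})"
  by (auto simp: inj_on_def)

lemma image_id_upd2_diff:
  assumes "w1 \<in> A" "w2 \<in> A" "p1 \<in> A" "p2 \<in> A"
    and "w1 \<noteq> w2" "p1 \<noteq> p2" "w1 \<noteq> p2" "w2 \<noteq> p1"
  shows "id(p1 := w1, p2 := w2) ` (A - {w1, w2}) = A - {p1, p2}"
  using assms by (cases "p1 = w1"; cases "p2 = w2") (auto simp: image_iff; force)+

section \<open>Phylogenetic networks\<close>

locale network =
  fixes V :: "'v set" and E :: "('v \<times> 'v) set" and X :: "'v set"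
  assumes phylo: "phylo_network V E X" and two_leaves: "2 \<le> card X"
begin

lemma
  shows finite_V: "finite V" and arcs_in_V: "E \<subseteq> V \<times> V"
    and leaves_in_V: "X \<subseteq> V" and acyclic_E: "acyclic E"
  using phylo by (auto simp: phylo_network_def)

lemma finite_E: "finite E"
  using finite_V arcs_in_V by (meson finite_SigmaI finite_subset)

lemma
  shows unique_root: "\<exists>!r. r \<in> V \<and> indeg E r = 0"
    and root_outdeg: "r \<in> V \<Longrightarrow> indeg E r = 0 \<Longrightarrow> outdeg E r = 2"
    and outdeg_0_iff_leaf: "v \<in> V \<Longrightarrow> outdeg E v = 0 \<longleftrightarrow> v \<in> X"
    and leaf_indeg: "x \<in> X \<Longrightarrow> indeg E x = 1"
    and internal_degrees: "v \<in> V \<Longrightarrow> v \<notin> X \<Longrightarrow> indeg E v \<noteq> 0 \<Longrightarrow>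
      (indeg E v = 1 \<and> outdeg E v = 2) \<or> (indeg E v = 2 \<and> outdeg E v = 1)"
  using phylo two_leaves by (auto simp: phylo_network_def)

lemma leaf_children: "x \<in> X \<Longrightarrow> {c. (x, c) \<in> E} = {}"
  using outdeg_0_iff_leaf[of x] leaves_in_V finite_children[OF finite_E, of x]
  by (auto simp: outdeg_def)

lemma npaths_from_leaf: "x \<in> X \<Longrightarrow> npaths E x y = (if x = y then 1 else 0)"
  by (rule npaths_sink[OF finite_E acyclic_E leaf_children])

lemma leaf_rtrancl: "x \<in> X \<Longrightarrow> (x, u) \<in> E\<^sup>* \<Longrightarrow> u = x"
  using leaf_children by (auto elim: converse_rtranclE)

lemma leaf_parents:
  assumes "x \<in> X"
  shows "{u. (u, x) \<in> E} = {parent E x}"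
proof -
  obtain p where p: "{u. (u, x) \<in> E} = {p}"
    using leaf_indeg[OF assms] unfolding indeg_def by (rule card_1_singletonE)
  then have "parent E x = p" unfolding parent_def by auto
  with p show ?thesis by simp
qed

lemma parent_arc: "x \<in> X \<Longrightarrow> (parent E x, x) \<in> E"
  using leaf_parents by blast

lemma parent_internal: "x \<in> X \<Longrightarrow> parent E x \<in> V - X"
  using parent_arc[of x] arcs_in_V leaf_children[of "parent E x"] by auto

lemma card_children_le_2: "v \<in> V \<Longrightarrow> card {c. (v, c) \<in> E} \<le> 2"
  using outdeg_0_iff_leaf[of v] root_outdeg[of v] internal_degrees[of v]
  unfolding outdeg_def by fastforce

lemma children_eq_pair:
  assumes "v \<in> V" "(v, c) \<in> E" "(v, d) \<in> E" "c \<noteq> d"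
  shows "{c'. (v, c') \<in> E} = {c, d}"
proof -
  have "{c, d} \<subseteq> {c'. (v, c') \<in> E}" using assms(2,3) by auto
  moreover have "card {c'. (v, c') \<in> E} \<le> card {c, d}"
    using card_children_le_2[OF assms(1)] assms(4) by simp
  ultimately show ?thesis using finite_children[OF finite_E] by (metis card_seteq)
qed

lemma reachable_from_root:
  assumes "r \<in> V" "indeg E r = 0" "v \<in> V"
  shows "(r, v) \<in> E\<^sup>*"
  using finite_acyclic_wf[OF finite_E acyclic_E] assms(3)
proof (induction v rule: wf_induct_rule)
  case (less v)
  show ?case
  proof (cases "indeg E v = 0")
    case True
    then have "v = r" using unique_root assms(1,2) less.prems by blast
    then show ?thesis by simp
  next
    case False
    then obtain u where "(u, v) \<in> E" unfolding indeg_def by (metis Collect_empty_eq card.empty)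
    with less.IH arcs_in_V show ?thesis by (meson SigmaD1 rtrancl.rtrancl_into_rtrancl subsetD)
  qed
qed

end

section \<open>Reducing a cherry and cutting a reticulated cherry\<close>

lemma anc_tuple_nth: "i < length vs \<Longrightarrow> anc_tuple E vs x ! i = npaths E (vs ! i) x"
  by (simp add: anc_tuple_def)

lemma anc_profile_eqI:
  "(\<And>x. x \<in> X \<Longrightarrow> anc_tuple E vs x = t x) \<Longrightarrow> anc_profile E X vs = {(x, t x) | x. x \<in> X}"
  by (auto simp: anc_profile_def)

locale cherry_network = network +
  fixes a b p :: 'v
  assumes a_leaf: "a \<in> X" and b_leaf: "b \<in> X" and a_ne_b: "a \<noteq> b"
    and cherry: "is_cherry E a b"
  defines "p \<equiv> parent E b"
begin

lemma p_internal: "p \<in> V - X"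
  unfolding p_def by (rule parent_internal[OF b_leaf])

lemma arc_p_a: "(p, a) \<in> E" and arc_p_b: "(p, b) \<in> E"
  using parent_arc[OF a_leaf] parent_arc[OF b_leaf] cherry by (simp_all add: p_def is_cherry_def)

lemma a_parents: "{u. (u, a) \<in> E} = {p}"
  using leaf_parents[OF a_leaf] cherry by (simp add: p_def is_cherry_def)

lemma p_children: "{c. (p, c) \<in> E} = {a, b}"
  using children_eq_pair p_internal arc_p_a arc_p_b a_ne_b by simp

lemma npaths_from_p:
  assumes "x \<in> X"
  shows "npaths E p x = (if x = a then 1 else 0) + (if x = b then 1 else 0)"
proof -
  have "p \<noteq> x" using p_internal assms by auto
  then show ?thesis
    using npaths_rec[OF finite_E acyclic_E, of p x] p_children a_ne_b
    by (simp add: npaths_from_leaf[OF a_leaf] npaths_from_leaf[OF b_leaf])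
qed

lemma internal_eq_p_if_root:
  assumes "indeg E p = 0"
  shows "V - X = {p}"
proof -
  have "v = p" if "v \<in> V - X" for v
  proof -
    have "(p, v) \<in> E\<^sup>*" using reachable_from_root p_internal assms that by blast
    then show ?thesis
    proof (cases rule: converse_rtranclE)
      case (step c)
      then have "c \<in> X" using p_children a_leaf b_leaf by auto
      with step that show ?thesis using leaf_rtrancl by blast
    qed simp
  qed
  then show ?thesis using p_internal by blast
qed

lemma
  assumes "indeg E p \<noteq> 0"
  shows reduce_cherry_vertices: "fst (reduce_cherry V E a b) = V - {b} - {p}"
    and npaths_reduce_cherry:
      "v \<noteq> p \<Longrightarrow> x \<in> X - {b} \<Longrightarrow> npaths (snd (reduce_cherry V E a b)) v x = npaths E v x"
proof -
  let ?E1 = "E - {(p, b)}"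
  have "indeg E p = 1"
    using internal_degrees[of p] p_internal assms p_children a_ne_b by (simp add: outdeg_def)
  then obtain q where q: "{u. (u, p) \<in> E} = {q}" unfolding indeg_def by (rule card_1_singletonE)
  have "q \<noteq> p" using q acyclic_E by (auto simp: acyclic_def)
  have red: "reduce_cherry V E a b = suppress p (V - {b}, ?E1)"
    using assms by (simp add: reduce_cherry_def Let_def p_def)
  then show "fst (reduce_cherry V E a b) = V - {b} - {p}" by (simp add: suppress_def)
  assume "v \<noteq> p" "x \<in> X - {b}"
  have "finite ?E1" "acyclic ?E1" using finite_E acyclic_subset[OF acyclic_E] by auto
  moreover have "{u. (u, p) \<in> ?E1} = {q}" using q p_internal b_leaf by auto
  moreover have "{c. (p, c) \<in> ?E1} = {a}" using p_children a_ne_b by auto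
  moreover have "(q, a) \<notin> ?E1" using a_parents \<open>q \<noteq> p\<close> by auto
  moreover have "x \<noteq> p" using \<open>x \<in> X - {b}\<close> p_internal by auto
  ultimately have "npaths (snd (reduce_cherry V E a b)) v x = npaths ?E1 v x"
    unfolding red using \<open>v \<noteq> p\<close> by (intro npaths_suppress) auto
  also have "\<dots> = npaths E v x"
    using npaths_delete_arc[OF finite_E acyclic_E arc_p_b, of v x]
      npaths_from_leaf[OF b_leaf, of x] \<open>x \<in> X - {b}\<close> by auto
  finally show "npaths (snd (reduce_cherry V E a b)) v x = npaths E v x" .
qed

lemma column_eq_p:
  assumes "j < length vs" and "anc_tuple E vs a ! j = 1" "anc_tuple E vs b ! j = 1"
    and "\<forall>x \<in> X - {a, b}. anc_tuple E vs x ! j = 0" and "x \<in> X"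
  shows "npaths E (vs ! j) x = npaths E p x"
  using assms npaths_from_p anc_tuple_nth[OF assms(1)] a_ne_b by (cases "x = a"; cases "x = b") auto

lemma anc_profile_reduce_cherry:
  assumes "indeg E p \<noteq> 0"
    and renamed: "\<And>y. y \<in> set ys \<Longrightarrow> f y \<noteq> p \<and> (\<forall>x\<in>X. npaths E (f y) x = npaths E y x)"
  shows "anc_profile (snd (reduce_cherry V E a b)) (X - {b}) (map f ys)
    = {(x, map (\<lambda>v. npaths E v x) ys) | x. x \<in> X - {b}}"
proof (rule anc_profile_eqI)
  fix x assume x: "x \<in> X - {b}"
  have "npaths (snd (reduce_cherry V E a b)) (f y) x = npaths E y x" if "y \<in> set ys" for y
    using renamed[OF that] npaths_reduce_cherry[OF assms(1) _ x] x by auto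
  then show "anc_tuple (snd (reduce_cherry V E a b)) (map f ys) x = map (\<lambda>v. npaths E v x) ys"
    by (simp add: anc_tuple_def map_eq_conv)
qed

lemma reduce_cherry_profile:
  assumes ord: "is_ordering V X vs" and j: "j < length vs"
    and col_a: "anc_tuple E vs a ! j = 1" and col_b: "anc_tuple E vs b ! j = 1"
    and col_X: "\<forall>x \<in> X - {a, b}. anc_tuple E vs x ! j = 0"
  shows "\<exists>vs'. is_ordering (fst (reduce_cherry V E a b)) (X - {b}) vs' \<and>
    anc_profile (snd (reduce_cherry V E a b)) (X - {b}) vs' =
      {(x, [anc_tuple E vs x ! i. i \<leftarrow> [0..<length vs], i \<noteq> j]) | x. x \<in> X - {b}}"
proof -
  let ?w = "vs ! j" and ?ys = "nths vs {i. i \<noteq> j}"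
  have dist: "distinct vs" and set_vs: "set vs = V - X" using ord by (simp_all add: is_ordering_def)
  have set_ys: "set ?ys = set vs - {?w}" using set_nths_distinct[OF dist] j by auto
  have w_in: "?w \<in> set vs" using j by simp
  have target: "[anc_tuple E vs x ! i. i \<leftarrow> [0..<length vs], i \<noteq> j] = map (\<lambda>v. npaths E v x) ?ys"
    for x by (rule comprehension_upt_eq_map_nths) (simp add: anc_tuple_nth)
  show ?thesis
  proof (cases "indeg E p = 0")
    case True
    then have "set vs = {p}" using internal_eq_p_if_root set_vs by simp
    then have "?ys = []" using set_ys w_in by simp
    moreover have "reduce_cherry V E a b = ({a}, {})" using True by (simp add: reduce_cherry_def p_def)
    ultimately show ?thesis using a_leaf a_ne_b
      by (intro exI[of _ "[]"]) (auto simp: is_ordering_def anc_profile_def anc_tuple_def target)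
  next
    case False
    let ?f = "id(p := ?w)"
    have "p \<in> set vs" using p_internal set_vs by simp
    have image: "?f ` set ?ys = set vs - {p}"
      unfolding set_ys by (rule image_id_upd_diff[OF w_in \<open>p \<in> set vs\<close>])
    have "distinct (map ?f ?ys)"
      using dist inj_on_id_upd_diff by (simp add: distinct_map set_ys)
    moreover have "set (map ?f ?ys) = V - {b} - {p} - (X - {b})"
      using image set_vs b_leaf by auto
    ultimately have "is_ordering (fst (reduce_cherry V E a b)) (X - {b}) (map ?f ?ys)"
      unfolding is_ordering_def reduce_cherry_vertices[OF False] ..
    moreover have "?f y \<noteq> p \<and> (\<forall>x\<in>X. npaths E (?f y) x = npaths E y x)" if "y \<in> set ?ys" for y
    proof -
      have "?f y \<in> set vs - {p}" using image that by blast
      moreover have "npaths E (?f y) x = npaths E y x" if "x \<in> X" for x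
        using column_eq_p[OF j col_a col_b col_X that] by (cases "y = p") simp_all
      ultimately show ?thesis by blast
    qed
    then have "anc_profile (snd (reduce_cherry V E a b)) (X - {b}) (map ?f ?ys)
        = {(x, map (\<lambda>v. npaths E v x) ?ys) | x. x \<in> X - {b}}"
      by (rule anc_profile_reduce_cherry[OF False])
    ultimately show ?thesis by (intro exI[of _ "map ?f ?ys"]) (simp add: target)
  qed
qed

end

locale ret_cherry_network = network +
  fixes a b pa pb :: 'v
  assumes a_leaf: "a \<in> X" and b_leaf: "b \<in> X" and a_ne_b: "a \<noteq> b"
    and ret_cherry: "is_ret_cherry E a b"
  defines "pa \<equiv> parent E a" and "pb \<equiv> parent E b"
begin

lemma pa_internal: "pa \<in> V - X" and pb_internal: "pb \<in> V - X"
  using parent_internal a_leaf b_leaf by (auto simp: pa_def pb_def)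

lemma arc_pa_a: "(pa, a) \<in> E" and arc_pb_b: "(pb, b) \<in> E"
  using parent_arc a_leaf b_leaf by (auto simp: pa_def pb_def)

lemma a_parents: "{u. (u, a) \<in> E} = {pa}" and b_parents: "{u. (u, b) \<in> E} = {pb}"
  using leaf_parents a_leaf b_leaf by (auto simp: pa_def pb_def)

lemma pa_pb_arc: "(pa, pb) \<in> E" and pb_indeg: "indeg E pb = 2"
  using ret_cherry by (simp_all add: is_ret_cherry_def pa_def pb_def)

lemma pa_ne_pb: "pa \<noteq> pb"
  using pa_pb_arc acyclic_E unfolding acyclic_def by (metis r_into_trancl')

lemma pb_children: "{c. (pb, c) \<in> E} = {b}"
proof -
  have "outdeg E pb = 1"
    using internal_degrees[of pb] pb_internal pb_indeg by simp
  then obtain c where "{c. (pb, c) \<in> E} = {c}" unfolding outdeg_def by (rule card_1_singletonE)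
  with arc_pb_b show ?thesis by auto
qed

lemma pa_children: "{c. (pa, c) \<in> E} = {a, pb}"
  using children_eq_pair pa_internal pb_internal arc_pa_a pa_pb_arc a_leaf by auto

lemma pb_parents:
  obtains u where "{y. (y, pb) \<in> E} = {pa, u}" and "u \<noteq> pa"
proof -
  obtain y1 y2 where y: "{y. (y, pb) \<in> E} = {y1, y2}" "y1 \<noteq> y2"
    using pb_indeg unfolding indeg_def card_2_iff by blast
  then consider "pa = y1" | "pa = y2" using pa_pb_arc by auto
  then show ?thesis
  proof cases
    case 1
    then show ?thesis using that y by auto
  next
    case 2
    then show ?thesis using that[of y1] y by (auto simp: insert_commute)
  qed
qed

text \<open>pa is not the root: the other parent u of pb would have to be reachable from pa, but
  below pa there are only a, pb and b.\<close>
lemma pa_parent: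
  obtains q where "{y. (y, pa) \<in> E} = {q}"
proof -
  obtain u where u: "{y. (y, pb) \<in> E} = {pa, u}" "u \<noteq> pa" by (rule pb_parents)
  have "indeg E pa \<noteq> 0"
  proof
    assume "indeg E pa = 0"
    moreover have "u \<in> V" using u arcs_in_V by auto
    ultimately have "(pa, u) \<in> E\<^sup>+"
      using reachable_from_root pa_internal u(2) by (auto simp: rtrancl_eq_or_trancl)
    then obtain c where c: "(pa, c) \<in> E" "(c, u) \<in> E\<^sup>*" by (auto dest: tranclD)
    have "(u, pb) \<in> E" using u by auto
    show False
    proof (cases "c = a")
      case True
      then have "u = a" using c leaf_rtrancl a_leaf by blast
      then show False using \<open>(u, pb) \<in> E\<close> leaf_children a_leaf by auto
    next
      case False
      then have "c = pb" using c pa_children by auto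
      then have "(pb, pb) \<in> E\<^sup>+" using c \<open>(u, pb) \<in> E\<close> by auto
      then show False using acyclic_E by (simp add: acyclic_def)
    qed
  qed
  moreover have "a \<noteq> pb" using a_leaf pb_internal by auto
  ultimately have "indeg E pa = 1"
    using internal_degrees[of pa] pa_internal pa_children by (simp add: outdeg_def)
  then show ?thesis using that unfolding indeg_def by (rule card_1_singletonE)
qed

lemma npaths_from_pb: "x \<in> X \<Longrightarrow> npaths E pb x = (if x = b then 1 else 0)"
  using npaths_rec[OF finite_E acyclic_E, of pb x] pb_children pb_internal
  by (auto simp: npaths_from_leaf[OF b_leaf])

lemma npaths_from_pa:
  assumes "x \<in> X"
  shows "npaths E pa x = (if x = a then 1 else 0) + (if x = b then 1 else 0)"
proof -
  have "pa \<noteq> x" "a \<noteq> pb" using pa_internal pb_internal assms a_leaf by auto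
  then show ?thesis
    using npaths_rec[OF finite_E acyclic_E, of pa x] pa_children npaths_from_pb[OF assms]
    by (simp add: npaths_from_leaf[OF a_leaf])
qed

lemma
  shows cut_ret_cherry_vertices: "fst (cut_ret_cherry V E a b) = V - {pa} - {pb}"
    and npaths_cut_ret_cherry_eq_delete_arc: "v \<notin> {pa, pb} \<Longrightarrow> x \<notin> {pa, pb} \<Longrightarrow>
      npaths (snd (cut_ret_cherry V E a b)) v x = npaths (E - {(pa, pb)}) v x"
proof -
  let ?E1 = "E - {(pa, pb)}"
  obtain q where q: "{y. (y, pa) \<in> E} = {q}" by (rule pa_parent)
  obtain u where u: "{y. (y, pb) \<in> E} = {pa, u}" "u \<noteq> pa" by (rule pb_parents)
  have "q \<noteq> pa" "u \<noteq> pb" using q u acyclic_E by (auto simp: acyclic_def)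
  have "q \<noteq> pb"
  proof
    assume "q = pb"
    then have "(pb, pa) \<in> E" using q by blast
    then have "pa = b" using pb_children by blast
    then show False using pa_internal b_leaf by simp
  qed
  have "a \<noteq> pb" "b \<noteq> pa" using a_leaf b_leaf pa_internal pb_internal by auto
  have fin1: "finite ?E1" and acy1: "acyclic ?E1" using finite_E acyclic_subset[OF acyclic_E] by auto
  have q1: "{y. (y, pa) \<in> ?E1} = {q}" using q pa_ne_pb by auto
  have a1: "{z. (pa, z) \<in> ?E1} = {a}" using pa_children \<open>a \<noteq> pb\<close> by auto
  have "(q, a) \<notin> ?E1" using a_parents \<open>q \<noteq> pa\<close> by auto
  define E2 where "E2 = snd (suppress pa (V, ?E1))"
  have cut: "cut_ret_cherry V E a b = suppress pb (V - {pa}, E2)"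
    unfolding cut_ret_cherry_def Let_def pa_def[symmetric] pb_def[symmetric] E2_def
    by (simp add: suppress_def)
  then show "fst (cut_ret_cherry V E a b) = V - {pa} - {pb}" by (simp add: suppress_def)
  have "E2 = insert (q, a) {e \<in> ?E1. fst e \<noteq> pa \<and> snd e \<noteq> pa}"
    unfolding E2_def by (rule suppress_arcs[OF q1 a1])
  then have E2: "(y, z) \<in> E2 \<longleftrightarrow> (y = q \<and> z = a) \<or> ((y, z) \<in> E \<and> y \<noteq> pa \<and> z \<noteq> pa)"
    for y z by auto
  have "(y, pb) \<in> E \<longleftrightarrow> y = pa \<or> y = u" "(pb, z) \<in> E \<longleftrightarrow> z = b" "(y, b) \<in> E \<longleftrightarrow> y = pb"
    for y z using u pb_children b_parents by blast+
  then have u2: "{y. (y, pb) \<in> E2} = {u}" and b2: "{z. (pb, z) \<in> E2} = {b}"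
    and "(u, b) \<notin> E2"
    using \<open>u \<noteq> pa\<close> \<open>u \<noteq> pb\<close> \<open>a \<noteq> pb\<close> \<open>b \<noteq> pa\<close> \<open>q \<noteq> pb\<close> pa_ne_pb a_ne_b
    by (auto simp: E2)
  assume "v \<notin> {pa, pb}" "x \<notin> {pa, pb}"
  then have "npaths (snd (cut_ret_cherry V E a b)) v x = npaths E2 v x"
    unfolding cut using finite_suppress[OF fin1 acy1 q1 a1] acyclic_suppress[OF fin1 acy1 q1 a1]
    by (intro npaths_suppress[OF _ _ u2 b2 \<open>(u, b) \<notin> E2\<close>]) (auto simp: E2_def)
  also have "\<dots> = npaths ?E1 v x"
    unfolding E2_def using \<open>v \<notin> {pa, pb}\<close> \<open>x \<notin> {pa, pb}\<close>
    by (intro npaths_suppress[OF fin1 acy1 q1 a1 \<open>(q, a) \<notin> ?E1\<close>]) auto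
  finally show "npaths (snd (cut_ret_cherry V E a b)) v x = npaths ?E1 v x" .
qed

lemma npaths_cut_ret_cherry:
  assumes "v \<notin> {pa, pb}" "x \<in> X - {b}"
  shows "npaths (snd (cut_ret_cherry V E a b)) v x = npaths E v x"
proof -
  have "x \<notin> {pa, pb}" using assms(2) pa_internal pb_internal by auto
  then show ?thesis
    using npaths_cut_ret_cherry_eq_delete_arc[OF assms(1)]
      npaths_delete_arc[OF finite_E acyclic_E pa_pb_arc, of v x] npaths_from_pb assms(2) by simp
qed

text \<open>The paths from v to b that are lost by the cut are exactly those through the arc
  (pa, pb); they correspond to the paths from v to pa, and hence to a.\<close>
lemma npaths_cut_ret_cherry_b:
  assumes "v \<notin> {a, pa, pb}"
  shows "npaths (snd (cut_ret_cherry V E a b)) v b = npaths E v b - npaths E v a"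
proof -
  have "b \<notin> {pa, pb}" using b_leaf pa_internal pb_internal by auto
  moreover have "npaths E v a = npaths E v pa"
    using npaths_unique_parent[OF finite_E acyclic_E a_parents] assms by simp
  ultimately show ?thesis
    using npaths_cut_ret_cherry_eq_delete_arc[of v b] assms
      npaths_delete_arc[OF finite_E acyclic_E pa_pb_arc, of v b] npaths_from_pb[OF b_leaf] by simp
qed

lemma
  assumes "j < length vs" and "anc_tuple E vs a ! j = 1" "anc_tuple E vs b ! j = 1"
    and "\<forall>x \<in> X - {a, b}. anc_tuple E vs x ! j = 0" and "x \<in> X"
  shows column_eq_pa: "npaths E (vs ! j) x = npaths E pa x"
  using assms npaths_from_pa anc_tuple_nth[OF assms(1)] a_ne_b by (cases "x = a"; cases "x = b") auto

lemma column_eq_pb: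
  assumes "k < length vs" and "anc_tuple E vs b ! k = 1" "\<forall>x \<in> X - {b}. anc_tuple E vs x ! k = 0"
    and "x \<in> X"
  shows "npaths E (vs ! k) x = npaths E pb x"
  using assms npaths_from_pb anc_tuple_nth[OF assms(1)] by (cases "x = b") auto

lemma anc_profile_cut_ret_cherry:
  assumes renamed: "\<And>y. y \<in> set ys \<Longrightarrow> f y \<notin> {a, pa, pb} \<and> (\<forall>x\<in>X. npaths E (f y) x = npaths E y x)"
  shows "anc_profile (snd (cut_ret_cherry V E a b)) X (map f ys) = {(x, if x = b
    then map (\<lambda>v. npaths E v b - npaths E v a) ys else map (\<lambda>v. npaths E v x) ys) | x. x \<in> X}"
proof (rule anc_profile_eqI)
  fix x assume x: "x \<in> X"
  have "npaths (snd (cut_ret_cherry V E a b)) (f y) x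
      = (if x = b then npaths E y b - npaths E y a else npaths E y x)" if "y \<in> set ys" for y
  proof (cases "x = b")
    case True
    then show ?thesis using renamed[OF that] npaths_cut_ret_cherry_b a_leaf b_leaf by auto
  next
    case False
    then show ?thesis using renamed[OF that] npaths_cut_ret_cherry x by auto
  qed
  then show "anc_tuple (snd (cut_ret_cherry V E a b)) (map f ys) x = (if x = b
    then map (\<lambda>v. npaths E v b - npaths E v a) ys else map (\<lambda>v. npaths E v x) ys)"
    by (cases "x = b") (simp_all add: anc_tuple_def map_eq_conv)
qed

lemma cut_ret_cherry_profile:
  assumes ord: "is_ordering V X vs" and j: "j < length vs" and k: "k < length vs"
    and col_a: "anc_tuple E vs a ! j = 1" and col_b: "anc_tuple E vs b ! j = 1"
    and col_X: "\<forall>x \<in> X - {a, b}. anc_tuple E vs x ! j = 0"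
    and col_b': "anc_tuple E vs b ! k = 1" and col_X': "\<forall>x \<in> X - {b}. anc_tuple E vs x ! k = 0"
  shows "\<exists>vs'. is_ordering (fst (cut_ret_cherry V E a b)) X vs' \<and>
    anc_profile (snd (cut_ret_cherry V E a b)) X vs' =
      {(x, [anc_tuple E vs x ! i. i \<leftarrow> [0..<length vs], i \<noteq> j \<and> i \<noteq> k]) | x. x \<in> X - {b}}
      \<union> {(b, [anc_tuple E vs b ! i - anc_tuple E vs a ! i.
                i \<leftarrow> [0..<length vs], i \<noteq> j \<and> i \<noteq> k])}"
proof -
  let ?w1 = "vs ! j" and ?w2 = "vs ! k" and ?ys = "nths vs {i. i \<noteq> j \<and> i \<noteq> k}"
  let ?f = "id(pa := ?w1, pb := ?w2)"
  have dist: "distinct vs" and set_vs: "set vs = V - X" using ord by (simp_all add: is_ordering_def)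
  note col_w1 = column_eq_pa[OF j col_a col_b col_X] and col_w2 = column_eq_pb[OF k col_b' col_X']
  have "?w1 \<noteq> pb" "?w2 \<noteq> pa" "?w1 \<noteq> ?w2"
    using col_w1[OF a_leaf] col_w2[OF a_leaf] npaths_from_pa[OF a_leaf] npaths_from_pb[OF a_leaf] a_ne_b
    by auto
  have set_ys: "set ?ys = set vs - {?w1, ?w2}" using set_nths_distinct[OF dist] j k by auto
  have "?w1 \<in> set vs" "?w2 \<in> set vs" using j k by simp_all
  moreover have "pa \<in> set vs" "pb \<in> set vs" using pa_internal pb_internal set_vs by simp_all
  ultimately have image: "?f ` set ?ys = set vs - {pa, pb}"
    unfolding set_ys using \<open>?w1 \<noteq> ?w2\<close> pa_ne_pb \<open>?w1 \<noteq> pb\<close> \<open>?w2 \<noteq> pa\<close>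
    by (rule image_id_upd2_diff)
  have "distinct (map ?f ?ys)"
    using dist inj_on_id_upd2_diff[OF \<open>?w1 \<noteq> ?w2\<close>] by (simp add: distinct_map set_ys)
  moreover have "set (map ?f ?ys) = V - {pa} - {pb} - X" using image set_vs by auto
  ultimately have ordering: "is_ordering (fst (cut_ret_cherry V E a b)) X (map ?f ?ys)"
    unfolding is_ordering_def cut_ret_cherry_vertices ..
  have renamed: "?f y \<notin> {a, pa, pb} \<and> (\<forall>x\<in>X. npaths E (?f y) x = npaths E y x)"
    if "y \<in> set ?ys" for y
  proof -
    have "?f y \<in> V - X - {pa, pb}" using image that set_vs by blast
    then have "?f y \<notin> {a, pa, pb}" using a_leaf by blast
    moreover have "npaths E (?f y) x = npaths E y x" if "x \<in> X" for x
      using col_w1[OF that] col_w2[OF that] pa_ne_pb by (cases "y = pa"; cases "y = pb") simp_all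
    ultimately show ?thesis by blast
  qed
  have profile: "anc_profile (snd (cut_ret_cherry V E a b)) X (map ?f ?ys) = {(x, if x = b
      then map (\<lambda>v. npaths E v b - npaths E v a) ?ys else map (\<lambda>v. npaths E v x) ?ys) | x. x \<in> X}"
    using renamed by (rule anc_profile_cut_ret_cherry)
  have target: "[anc_tuple E vs x ! i. i \<leftarrow> [0..<length vs], i \<noteq> j \<and> i \<noteq> k]
      = map (\<lambda>v. npaths E v x) ?ys" for x
    by (rule comprehension_upt_eq_map_nths) (simp add: anc_tuple_nth)
  have target_b: "[anc_tuple E vs b ! i - anc_tuple E vs a ! i. i \<leftarrow> [0..<length vs], i \<noteq> j \<and> i \<noteq> k]
      = map (\<lambda>v. npaths E v b - npaths E v a) ?ys"
    by (rule comprehension_upt_eq_map_nths) (simp add: anc_tuple_nth)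
  show ?thesis
  proof (intro exI conjI)
    show "is_ordering (fst (cut_ret_cherry V E a b)) X (map ?f ?ys)" by (rule ordering)
    show "anc_profile (snd (cut_ret_cherry V E a b)) X (map ?f ?ys) =
      {(x, [anc_tuple E vs x ! i. i \<leftarrow> [0..<length vs], i \<noteq> j \<and> i \<noteq> k]) | x. x \<in> X - {b}}
      \<union> {(b, [anc_tuple E vs b ! i - anc_tuple E vs a ! i.
                i \<leftarrow> [0..<length vs], i \<noteq> j \<and> i \<noteq> k])}"
      unfolding profile target target_b using b_leaf by auto
  qed
qed

end

theorem lemma5p1:
  fixes V X :: "'v set" and E :: "('v \<times> 'v) set" and vs :: "'v list" and a b :: 'v
  assumes net: "phylo_network V E X"
    and two: "card X \<ge> 2"
    and ord: "is_ordering V X vs"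
    and ab: "a \<in> X" "b \<in> X" "a \<noteq> b"
  shows
   "(is_cherry E a b \<longrightarrow>
      (\<forall>j < length vs.
         anc_tuple E vs a ! j = 1 \<and> anc_tuple E vs b ! j = 1 \<and>
         (\<forall>x \<in> X - {a, b}. anc_tuple E vs x ! j = 0) \<longrightarrow>
         (\<exists>vs'. is_ordering (fst (reduce_cherry V E a b)) (X - {b}) vs' \<and>
            anc_profile (snd (reduce_cherry V E a b)) (X - {b}) vs' =
              {(x, [anc_tuple E vs x ! i. i \<leftarrow> [0..<length vs], i \<noteq> j]) | x. x \<in> X - {b}})))
    \<and>
    (is_ret_cherry E a b \<longrightarrow>
      (\<forall>j < length vs. \<forall>k < length vs.
         anc_tuple E vs a ! j = 1 \<and> anc_tuple E vs b ! j = 1 \<and>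
         (\<forall>x \<in> X - {a, b}. anc_tuple E vs x ! j = 0) \<and>
         anc_tuple E vs b ! k = 1 \<and> (\<forall>x \<in> X - {b}. anc_tuple E vs x ! k = 0) \<longrightarrow>
         (\<exists>vs'. is_ordering (fst (cut_ret_cherry V E a b)) X vs' \<and>
            anc_profile (snd (cut_ret_cherry V E a b)) X vs' =
              {(x, [anc_tuple E vs x ! i. i \<leftarrow> [0..<length vs], i \<noteq> j \<and> i \<noteq> k]) | x. x \<in> X - {b}}
              \<union> {(b, [anc_tuple E vs b ! i - anc_tuple E vs a ! i.
                        i \<leftarrow> [0..<length vs], i \<noteq> j \<and> i \<noteq> k])})))"
proof -
  have cherry: "cherry_network V E X a b" if "is_cherry E a b"
    using net two ab that by (simp add: cherry_network_def cherry_network_axioms_def network_def)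
  have ret_cherry: "ret_cherry_network V E X a b" if "is_ret_cherry E a b"
    using net two ab that
    by (simp add: ret_cherry_network_def ret_cherry_network_axioms_def network_def)
  show ?thesis
    using cherry_network.reduce_cherry_profile[OF cherry ord]
      ret_cherry_network.cut_ret_cherry_profile[OF ret_cherry ord] by blast
qed

end
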